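(* For every sufficiently small $\eta>0$ there exists $r>0$ such that, whenever $z_0\in\mathbb C$ satisfies $r/2<|z_0|<r$, the following hold. (a) For distinct pairs $(I,n),(I',n')\in\mathcal I$, the circles $\mathrm{im}(\gamma_{I,n})$ and $\mathrm{im}(\gamma_{I',n'})$ are disjoint. (b) For every $(I,n)\in\mathcal I$: - $a_i(z_0)\in B_{I,n}$ for all $i\in I$, and - $a_j(z_0)\notin B_{I,n}\cup\mathrm{im}(\gamma_{I,n})$ for all $j\notin I$.
   Context: Let $d\ge2$ and let $a_1,\dots,a_d\in\mathbb C[[x]]$ be distinct power series with positive radii of convergence. Let $e_{i,j}=v_x(a_i-a_j)$ be the $x$-adic valuation. Let $\mathcal I$ be the set of pairs $(I,n)$ such that: - $I\subseteq\{1,\dots,d\}$ has at least two elements, - $n\ge1$ is an integer, - $e_{i,j}\ge n$ for all distinct $i,j\in I$, and - $I$ is maximal among subsets with this property. For $n\ge1$ let $F_n:\mathbb C[[x]]\to\mathbb C[x]$ be the truncation $\sum_k c_kx^k\mapsto\sum_{k=0}^{n-1}c_kx^k$. For $(I,n)\in\mathcal I$ let $b_{I,n}$ be the common value of $F_n(a_i)$ for $i\in I$. Given $z_0$ and $\eta,r>0$, define: - $w_{I,n}=b_{I,n}(z_0)$; - the loop $\gamma_{I,n}(t)=w_{I,n}+r^{n-1}\eta e^{2\pi\sqrt{-1}t}$ for $t\in[0,1]$, with image the circle $\mathrm{im}(\gamma_{I,n})$; - the open disk $B_{I,n}=\{z\in\mathbb C: |z-w_{I,n}|<r^{n-1}\eta\}$.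 *)

theory Defs
  imports "HOL-Analysis.Analysis" "HOL-Computational_Algebra.Polynomial"
begin

text \<open>x-adic valuation of a_i - a_j (for distinct series this is the subdegree).\<close>
definition val_diff :: "(nat \<Rightarrow> complex fps) \<Rightarrow> nat \<Rightarrow> nat \<Rightarrow> nat" where
  "val_diff a i j = subdegree (a i - a j)"

definition trunc_fps :: "nat \<Rightarrow> complex fps \<Rightarrow> complex poly" where
  "trunc_fps n f = (\<Sum>k<n. monom (fps_nth f k) k)"

definition clusterCond :: "(nat \<Rightarrow> complex fps) \<Rightarrow> nat \<Rightarrow> nat set \<Rightarrow> bool" where
  "clusterCond a n I = (\<forall>i\<in>I. \<forall>j\<in>I. i \<noteq> j \<longrightarrow> val_diff a i j \<ge> n)"

definition cluster_pairs :: "nat \<Rightarrow> (nat \<Rightarrow> complex fps) \<Rightarrow> (nat set \<times> nat) set" where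
  "cluster_pairs d a = {(I, n). I \<subseteq> {1..d} \<and> 2 \<le> card I \<and> n \<ge> 1 \<and> clusterCond a n I \<and>
       (\<forall>J. I \<subseteq> J \<and> J \<subseteq> {1..d} \<and> clusterCond a n J \<longrightarrow> J = I)}"

definition b_poly :: "(nat \<Rightarrow> complex fps) \<Rightarrow> nat set \<Rightarrow> nat \<Rightarrow> complex poly" where
  "b_poly a I n = (THE b. \<forall>i\<in>I. trunc_fps n (a i) = b)"

definition w_center :: "(nat \<Rightarrow> complex fps) \<Rightarrow> nat set \<Rightarrow> nat \<Rightarrow> complex \<Rightarrow> complex" where
  "w_center a I n z0 = poly (b_poly a I n) z0"

definition gamma_loop :: "(nat \<Rightarrow> complex fps) \<Rightarrow> nat set \<Rightarrow> nat \<Rightarrow> complex \<Rightarrow> real \<Rightarrow> real \<Rightarrow> real \<Rightarrow> complex" where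
  "gamma_loop a I n z0 \<eta> r t = w_center a I n z0 + complex_of_real (r ^ (n - 1) * \<eta>) * exp (2 * pi * \<i> * complex_of_real t)"

definition B_disk :: "(nat \<Rightarrow> complex fps) \<Rightarrow> nat set \<Rightarrow> nat \<Rightarrow> complex \<Rightarrow> real \<Rightarrow> real \<Rightarrow> complex set" where
  "B_disk a I n z0 \<eta> r = ball (w_center a I n z0) (r ^ (n - 1) * \<eta>)"

end

theory Submission
  imports Defs "HOL-Complex_Analysis.Contour_Integration"
begin

text \<open>
  Let e be the valuation of a_i - a_j and c its leading coefficient. On the annulus
  r/2 < |z| < r the difference of a_i and a_j, or of any of their truncations beyond x^e, has
  modulus at least (|c|/2^e - o(1)) r^e, whereas a_i - F_n(a_i) and F_n'(a_i) - F_n(a_i) for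
  n \<le> n' are o(r^(n-1)). Choose 4\<eta> < |c|/2^e for all pairs and then r small. The centre
  w_(I,n) = F_n(a_i)(z_0) is within \<eta>r^(n-1)/2 of a_i(z_0) for i \<in> I, but at distance at least
  3\<eta>r^e > \<eta>r^(n-1) from a_j(z_0) for j \<notin> I, because maximality of I forces e < n.
  Two circles of distinct clusters are either nested, when one cluster refines the other and
  the finer circle, of radius at most \<eta>r^n, lies inside the coarser disk, or their centres
  come from series separated at a level e below both levels, so they are 3\<eta>r^e apart while
  the radii add up to at most 2\<eta>r^e.
\<close>

section \<open>Truncations of power series\<close>

lemma coeff_trunc_fps: "coeff (trunc_fps n f) k = (if k < n then fps_nth f k else 0)"
  unfolding trunc_fps_def by (auto simp: coeff_sum coeff_monom)

lemma fps_of_poly_trunc_fps: "fps_of_poly (trunc_fps n f) = fps_cutoff n f"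
  by (rule fps_ext) (simp add: coeff_trunc_fps)

lemma trunc_fps_eq_iff: "trunc_fps n f = trunc_fps n g \<longleftrightarrow> (\<forall>k<n. fps_nth f k = fps_nth g k)"
  by (metis fps_of_poly_trunc_fps fps_cutoff_eq_fps_cutoff_iff fps_of_poly_eq_iff)

lemma le_subdegree_diff_iff_trunc_fps_eq:
  assumes "f \<noteq> g"
  shows "n \<le> subdegree (f - g) \<longleftrightarrow> trunc_fps n f = trunc_fps n g"
proof
  assume n: "n \<le> subdegree (f - g)"
  have "fps_nth f k = fps_nth g k" if "k < n" for k
    using nth_less_subdegree_zero[of k "f - g"] that n by simp
  then show "trunc_fps n f = trunc_fps n g"
    by (simp add: trunc_fps_eq_iff)
next
  assume "trunc_fps n f = trunc_fps n g"
  then show "n \<le> subdegree (f - g)"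
    using assms by (intro subdegree_geI) (auto simp: trunc_fps_eq_iff)
qed

text \<open>Level \<open>\<infinity>\<close> keeps the whole series, so that \<open>a\<^sub>i\<close> and its truncations are treated alike.\<close>

definition fps_cut :: "enat \<Rightarrow> 'a::zero fps \<Rightarrow> 'a fps" where
  "fps_cut s f = (case s of enat n \<Rightarrow> fps_cutoff n f | \<infinity> \<Rightarrow> f)"

lemma fps_cut_nth: "fps_nth (fps_cut s f) k = (if enat k < s then fps_nth f k else 0)"
  by (cases s) (auto simp: fps_cut_def)

lemma fps_cut_infinity [simp]: "fps_cut \<infinity> f = f"
  by (simp add: fps_cut_def)

lemma eval_fps_cut_enat [simp]: "eval_fps (fps_cut (enat n) f) z = poly (trunc_fps n f) z"
  by (simp add: fps_cut_def flip: fps_of_poly_trunc_fps)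

lemma fps_conv_radius_fps_cut: "fps_conv_radius f \<le> fps_conv_radius (fps_cut s (f :: complex fps))"
  by (cases s) (simp_all add: fps_cut_def flip: fps_of_poly_trunc_fps)

lemma norm_less_fps_conv_radius_fps_cut:
  fixes f :: "complex fps"
  assumes "norm z < r" "ereal r < fps_conv_radius f"
  shows "norm z < fps_conv_radius (fps_cut s f)"
proof -
  have "ereal (norm z) < ereal r" using assms(1) by simp
  also note assms(2)
  also note fps_conv_radius_fps_cut
  finally show ?thesis .
qed


section \<open>Power series near the origin\<close>

lemma eventually_less_fps_conv_radius:
  assumes "fps_conv_radius f > 0"
  shows "\<forall>\<^sub>F r in at_right 0. ereal r < fps_conv_radius f"
proof -
  obtain \<rho> where "0 < ereal \<rho>" and \<rho>: "ereal \<rho> < fps_conv_radius f"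
    using ereal_dense2[OF assms] by blast
  then show ?thesis
    unfolding eventually_at_right_field
    by (intro exI[of _ \<rho>]) (auto intro: order.strict_trans[OF _ \<rho>])
qed

lemma eval_fps_eq_monom_plus_shift:
  fixes g :: "complex fps"
  assumes low: "\<And>k. k < N \<Longrightarrow> fps_nth g k = 0" and z: "norm z < fps_conv_radius g"
  shows "eval_fps g z = fps_nth g N * z ^ N + z ^ Suc N * eval_fps (fps_shift (Suc N) g) z"
proof -
  define h where "h = fps_shift (Suc N) g"
  have "fps_cutoff (Suc N) g = fps_const (fps_nth g N) * fps_X ^ N"
    using low by (intro fps_ext) (auto simp: less_Suc_eq)
  then have g_eq: "g = fps_X ^ Suc N * h + fps_const (fps_nth g N) * fps_X ^ N"
    using fps_shift_cutoff'[of "Suc N" g] by (simp add: h_def)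
  have "fps_conv_radius g \<le> fps_conv_radius (fps_X ^ Suc N * h)"
    using fps_conv_radius_mult[of "fps_X ^ Suc N" h] by (simp add: h_def del: power_Suc)
  then have tail: "norm z < fps_conv_radius (fps_X ^ Suc N * h)"
    by (rule order.strict_trans2[OF z])
  have head: "norm z < fps_conv_radius (fps_const (fps_nth g N) * fps_X ^ N)"
    using fps_conv_radius_mult[of "fps_const (fps_nth g N)" "fps_X ^ N"] by simp
  have "eval_fps g z = eval_fps (fps_X ^ Suc N * h) z
      + eval_fps (fps_const (fps_nth g N) * fps_X ^ N) z"
    by (subst g_eq) (rule eval_fps_add[OF tail head])
  also have "\<dots> = fps_nth g N * z ^ N + z ^ Suc N * eval_fps h z"
    using z by (simp add: eval_fps_mult h_def del: power_Suc)
  finally show ?thesis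
    by (simp add: h_def)
qed

lemma eval_fps_bounded_near_0:
  fixes h :: "complex fps"
  assumes "fps_conv_radius h > 0"
  shows "\<exists>\<delta>>0. \<exists>C>0. \<forall>z. norm z < \<delta> \<longrightarrow> norm (eval_fps h z) \<le> C"
proof -
  have "0 \<in> eball 0 (fps_conv_radius h)"
    using assms by (simp add: zero_ereal_def)
  then have "isCont (eval_fps h) 0"
    using continuous_on_eval_fps[of h] by (simp add: continuous_on_eq_continuous_at)
  then obtain \<delta> where "\<delta> > 0"
    and near: "\<And>z. dist z 0 < \<delta> \<Longrightarrow> dist (eval_fps h z) (eval_fps h 0) < 1"
    unfolding continuous_at_eps_delta by (meson zero_less_one)
  have "norm (eval_fps h z) \<le> norm (eval_fps h 0) + 1" if "norm z < \<delta>" for z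
    using near[of z] that norm_triangle_ineq2[of "eval_fps h z" "eval_fps h 0"]
    by (simp add: dist_norm)
  with \<open>\<delta> > 0\<close> show ?thesis
    by (intro exI[of _ \<delta>] conjI exI[of _ "norm (eval_fps h 0) + 1"]) (auto simp: add_nonneg_pos)
qed

lemma eventually_norm_eval_fps_sub_monom_le:
  fixes g :: "complex fps"
  assumes radius: "fps_conv_radius g > 0" and low: "\<And>k. k < N \<Longrightarrow> fps_nth g k = 0"
    and "\<epsilon> > 0"
  shows "\<forall>\<^sub>F r in at_right 0. \<forall>z. norm z < r \<longrightarrow>
           norm (eval_fps g z - fps_nth g N * z ^ N) \<le> \<epsilon> * r ^ N"
proof -
  define h where "h = fps_shift (Suc N) g"
  obtain \<delta> C where "\<delta> > 0" "C > 0" and bound: "\<And>z. norm z < \<delta> \<Longrightarrow> norm (eval_fps h z) \<le> C"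
    using eval_fps_bounded_near_0[of h] radius by (auto simp: h_def)
  have "\<forall>\<^sub>F r in at_right 0. r < min \<delta> (\<epsilon> / C)"
    unfolding eventually_at_right_field using \<open>\<delta> > 0\<close> \<open>\<epsilon> > 0\<close> \<open>C > 0\<close>
    by (intro exI[of _ "min \<delta> (\<epsilon> / C)"]) auto
  with eventually_less_fps_conv_radius[OF radius] eventually_at_right_less[of 0]
  show ?thesis
  proof eventually_elim
    case (elim r)
    show ?case
    proof (intro allI impI)
      fix z :: complex assume z: "norm z < r"
      have "ereal (norm z) < ereal r" using z by simp
      also have "\<dots> < fps_conv_radius g" by (rule elim(1))
      finally have "norm (eval_fps g z - fps_nth g N * z ^ N) = norm z ^ Suc N * norm (eval_fps h z)"
        by (simp add: eval_fps_eq_monom_plus_shift[OF low] h_def norm_mult norm_power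
            del: power_Suc)
      also have "\<dots> \<le> r ^ Suc N * C"
        using z elim bound[of z] by (intro mult_mono power_mono) auto
      also have "\<dots> = r ^ N * (r * C)" by simp
      also have "\<dots> \<le> r ^ N * \<epsilon>"
        using elim \<open>C > 0\<close> by (intro mult_left_mono) (auto simp: field_simps)
      finally show "norm (eval_fps g z - fps_nth g N * z ^ N) \<le> \<epsilon> * r ^ N"
        by (simp add: mult.commute)
    qed
  qed
qed

lemma eventually_norm_eval_fps_le:
  fixes g :: "complex fps"
  assumes "fps_conv_radius g > 0" "\<And>k. k \<le> N \<Longrightarrow> fps_nth g k = 0" "\<epsilon> > 0"
  shows "\<forall>\<^sub>F r in at_right 0. \<forall>z. norm z < r \<longrightarrow> norm (eval_fps g z) \<le> \<epsilon> * r ^ N"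
  using eventually_norm_eval_fps_sub_monom_le[of g N \<epsilon>] assms by simp

lemma eventually_norm_eval_fps_ge:
  fixes g :: "complex fps"
  assumes "fps_conv_radius g > 0" "\<And>k. k < N \<Longrightarrow> fps_nth g k = 0" "\<epsilon> > 0"
  shows "\<forall>\<^sub>F r in at_right 0. \<forall>z. r / 2 < norm z \<and> norm z < r \<longrightarrow>
           (norm (fps_nth g N) / 2 ^ N - \<epsilon>) * r ^ N \<le> norm (eval_fps g z)"
proof -
  have "\<forall>\<^sub>F r in at_right 0. \<forall>z. norm z < r \<longrightarrow>
           norm (eval_fps g z - fps_nth g N * z ^ N) \<le> \<epsilon> * r ^ N"
    by (rule eventually_norm_eval_fps_sub_monom_le) (use assms in auto)
  with eventually_at_right_less[of 0] show ?thesis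
  proof eventually_elim
    case (elim r)
    show ?case
    proof (intro allI impI)
      fix z :: complex assume z: "r / 2 < norm z \<and> norm z < r"
      have "norm (fps_nth g N) * (r / 2) ^ N \<le> norm (fps_nth g N) * norm z ^ N"
        using z elim by (intro mult_left_mono power_mono) auto
      also have "\<dots> \<le> norm (eval_fps g z) + norm (eval_fps g z - fps_nth g N * z ^ N)"
        using norm_triangle_ineq3[of "eval_fps g z" "fps_nth g N * z ^ N"]
        by (simp add: norm_mult norm_power)
      finally have "norm (fps_nth g N) / 2 ^ N * r ^ N
          \<le> norm (eval_fps g z) + norm (eval_fps g z - fps_nth g N * z ^ N)"
        by (simp add: power_divide)
      moreover have "norm (eval_fps g z - fps_nth g N * z ^ N) \<le> \<epsilon> * r ^ N"
        using elim z by blast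
      ultimately show "(norm (fps_nth g N) / 2 ^ N - \<epsilon>) * r ^ N \<le> norm (eval_fps g z)"
        by (simp add: algebra_simps)
    qed
  qed
qed

lemma eventually_norm_eval_fps_cut_diff_le:
  fixes f :: "complex fps"
  assumes radius: "fps_conv_radius f > 0" and "1 \<le> n" "enat n \<le> s" "\<epsilon> > 0"
  shows "\<forall>\<^sub>F r in at_right 0. \<forall>z. norm z < r \<longrightarrow>
           norm (eval_fps (fps_cut s f) z - poly (trunc_fps n f) z) \<le> \<epsilon> * r ^ (n - 1)"
proof -
  define g where "g = fps_cut s f - fps_cut (enat n) f"
  have "fps_conv_radius f \<le> fps_conv_radius g"
    using fps_conv_radius_diff[of "fps_cut s f" "fps_cut (enat n) f"]
      fps_conv_radius_fps_cut[of f s] fps_conv_radius_fps_cut[of f "enat n"]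
    unfolding g_def by (auto simp: min_def split: if_splits)
  moreover have "fps_nth g k = 0" if "k \<le> n - 1" for k
  proof -
    have "enat k < enat n" using that assms(2) by simp
    also note \<open>enat n \<le> s\<close>
    finally show ?thesis using that assms(2) by (simp add: g_def fps_cut_nth)
  qed
  ultimately have "\<forall>\<^sub>F r in at_right 0. \<forall>z. norm z < r \<longrightarrow> norm (eval_fps g z) \<le> \<epsilon> * r ^ (n - 1)"
    using radius \<open>\<epsilon> > 0\<close> by (intro eventually_norm_eval_fps_le) auto
  with eventually_less_fps_conv_radius[OF radius] show ?thesis
  proof eventually_elim
    case (elim r)
    have "eval_fps g z = eval_fps (fps_cut s f) z - poly (trunc_fps n f) z" if "norm z < r" for z
      using norm_less_fps_conv_radius_fps_cut[OF that elim(1)] by (simp add: g_def eval_fps_diff)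
    with elim(2) show ?case by simp
  qed
qed

lemma eventually_norm_eval_fps_cut_diff_ge:
  fixes f g :: "complex fps"
  defines "e \<equiv> subdegree (f - g)"
  assumes radius: "fps_conv_radius f > 0" "fps_conv_radius g > 0" and "f \<noteq> g"
    and "enat e < s" "enat e < t"
    and small: "4 * \<eta> < norm (fps_nth (f - g) e) / 2 ^ e"
  shows "\<forall>\<^sub>F r in at_right 0. \<forall>z. r / 2 < norm z \<and> norm z < r \<longrightarrow>
           3 * \<eta> * r ^ e \<le> norm (eval_fps (fps_cut s f) z - eval_fps (fps_cut t g) z)"
proof -
  define h where "h = fps_cut s f - fps_cut t g"
  define c where "c = norm (fps_nth (f - g) e) / 2 ^ e"
  have h_nth: "fps_nth h k = fps_nth (f - g) k" if "k \<le> e" for k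
  proof -
    have "enat k \<le> enat e" using that by simp
    then have "enat k < s" "enat k < t" using assms(5,6) by (blast intro: le_less_trans)+
    then show ?thesis by (simp add: h_def fps_cut_nth)
  qed
  have "0 < min (fps_conv_radius f) (fps_conv_radius g)"
    using radius by simp
  also have "\<dots> \<le> fps_conv_radius h"
    using fps_conv_radius_diff[of "fps_cut s f" "fps_cut t g"]
      fps_conv_radius_fps_cut[of f s] fps_conv_radius_fps_cut[of g t]
    unfolding h_def by (auto simp: min_def split: if_splits)
  finally have radius_h: "0 < fps_conv_radius h" .
  have low: "fps_nth h k = 0" if "k < e" for k
    using h_nth[of k] nth_less_subdegree_zero[of k "f - g"] that by (simp add: e_def)
  have "c > 0"
    using nth_subdegree_nonzero[of "f - g"] \<open>f \<noteq> g\<close> unfolding c_def e_def by simp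
  then have "\<forall>\<^sub>F r in at_right 0. \<forall>z. r / 2 < norm z \<and> norm z < r \<longrightarrow>
      (norm (fps_nth h e) / 2 ^ e - c / 4) * r ^ e \<le> norm (eval_fps h z)"
    by (intro eventually_norm_eval_fps_ge radius_h low divide_pos_pos) simp_all
  with eventually_less_fps_conv_radius[OF radius(1)] eventually_less_fps_conv_radius[OF radius(2)]
    eventually_at_right_less[of 0]
  show ?thesis
  proof eventually_elim
    case (elim r)
    show ?case
    proof (intro allI impI)
      fix z :: complex assume z: "r / 2 < norm z \<and> norm z < r"
      have "3 * \<eta> * r ^ e \<le> (c - c / 4) * r ^ e"
        using small elim(3) by (intro mult_right_mono) (auto simp: c_def)
      also have "\<dots> \<le> norm (eval_fps h z)"
        using elim(4) z h_nth[of e] by (simp add: c_def)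
      also have "eval_fps h z = eval_fps (fps_cut s f) z - eval_fps (fps_cut t g) z"
        using z norm_less_fps_conv_radius_fps_cut elim(1,2) unfolding h_def
        by (intro eval_fps_diff) auto
      finally show "3 * \<eta> * r ^ e \<le> norm (eval_fps (fps_cut s f) z - eval_fps (fps_cut t g) z)" .
    qed
  qed
qed


section \<open>Clusters\<close>

lemma cluster_pairsD:
  assumes "(I, n) \<in> cluster_pairs d a"
  shows "I \<subseteq> {1..d}" "2 \<le> card I" "1 \<le> n" "clusterCond a n I"
    and "\<And>J. I \<subseteq> J \<Longrightarrow> J \<subseteq> {1..d} \<Longrightarrow> clusterCond a n J \<Longrightarrow> J = I"
proof -
  have "I \<subseteq> {1..d} \<and> 2 \<le> card I \<and> 1 \<le> n \<and> clusterCond a n I \<and>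
      (\<forall>J. I \<subseteq> J \<and> J \<subseteq> {1..d} \<and> clusterCond a n J \<longrightarrow> J = I)"
    using assms unfolding cluster_pairs_def mem_Collect_eq prod.case by assumption
  then show "I \<subseteq> {1..d}" "2 \<le> card I" "1 \<le> n" "clusterCond a n I"
    and "\<And>J. I \<subseteq> J \<Longrightarrow> J \<subseteq> {1..d} \<Longrightarrow> clusterCond a n J \<Longrightarrow> J = I"
    by blast+
qed

lemma cluster_pairs_level_le_val_diff:
  assumes "(I, n) \<in> cluster_pairs d a"
  shows "\<exists>i\<in>I. \<exists>j\<in>I. i \<noteq> j \<and> n \<le> val_diff a i j"
proof -
  note card = cluster_pairsD(2)[OF assms] and cond = cluster_pairsD(4)[OF assms]
  then have "finite I" "\<not> card I \<le> Suc 0"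
    using card.infinite by fastforce+
  then obtain i j where "i \<in> I" "j \<in> I" "i \<noteq> j"
    using card_le_Suc0_iff_eq by blast
  with cond show ?thesis
    unfolding clusterCond_def by blast
qed

definition max_val_diff :: "nat \<Rightarrow> (nat \<Rightarrow> complex fps) \<Rightarrow> nat" where
  "max_val_diff d a = Max ((\<lambda>(i, j). val_diff a i j) ` ({1..d} \<times> {1..d}))"

lemma cluster_pairs_level_le_max_val_diff:
  assumes "(I, n) \<in> cluster_pairs d a"
  shows "1 \<le> n" "n \<le> max_val_diff d a"
proof -
  obtain i j where "i \<in> I" "j \<in> I" "n \<le> val_diff a i j"
    using cluster_pairs_level_le_val_diff[OF assms] by blast
  moreover note cluster_pairsD(1,3)[OF assms]
  moreover have "val_diff a i j \<le> max_val_diff d a"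
    unfolding max_val_diff_def using calculation
    by (intro Max_ge finite_imageI) (auto intro!: image_eqI[of _ _ "(i, j)"])
  ultimately show "1 \<le> n" "n \<le> max_val_diff d a"
    by simp_all
qed

context
  fixes d :: nat and a :: "nat \<Rightarrow> complex fps"
  assumes inj: "inj_on a {1..d}"
begin

lemma clusterCond_iff_trunc_fps_eq:
  assumes "I \<subseteq> {1..d}"
  shows "clusterCond a n I \<longleftrightarrow> (\<forall>i\<in>I. \<forall>j\<in>I. trunc_fps n (a i) = trunc_fps n (a j))"
proof -
  have "(i \<noteq> j \<longrightarrow> n \<le> val_diff a i j) \<longleftrightarrow> trunc_fps n (a i) = trunc_fps n (a j)"
    if "i \<in> I" "j \<in> I" for i j
  proof (cases "i = j")
    case False
    then have "a i \<noteq> a j"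
      using inj_onD[OF inj] that assms by blast
    with False show ?thesis
      by (simp add: val_diff_def le_subdegree_diff_iff_trunc_fps_eq)
  qed simp
  then show ?thesis
    unfolding clusterCond_def by blast
qed

lemma cluster_pairs_eq_trunc_class:
  assumes "(I, n) \<in> cluster_pairs d a" "i \<in> I"
  shows "I = {j \<in> {1..d}. trunc_fps n (a j) = trunc_fps n (a i)}"
proof -
  define J where "J = {j \<in> {1..d}. trunc_fps n (a j) = trunc_fps n (a i)}"
  have I: "I \<subseteq> {1..d}"
    by (rule cluster_pairsD(1)[OF assms(1)])
  have "\<forall>j\<in>I. \<forall>k\<in>I. trunc_fps n (a j) = trunc_fps n (a k)"
    using clusterCond_iff_trunc_fps_eq[OF I] cluster_pairsD(4)[OF assms(1)] by blast
  with I assms(2) have "I \<subseteq> J"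
    unfolding J_def by blast
  moreover have J: "J \<subseteq> {1..d}"
    unfolding J_def by blast
  moreover have "clusterCond a n J"
    unfolding clusterCond_iff_trunc_fps_eq[OF J] by (simp add: J_def)
  ultimately have "J = I"
    by (rule cluster_pairsD(5)[OF assms(1)])
  then show ?thesis
    unfolding J_def by (rule sym)
qed

lemma w_center_cluster_pairs:
  assumes "(I, n) \<in> cluster_pairs d a" "i \<in> I"
  shows "w_center a I n z = poly (trunc_fps n (a i)) z"
proof -
  have "b_poly a I n = trunc_fps n (a i)"
    unfolding b_poly_def
  proof (rule the_equality)
    show "\<forall>j\<in>I. trunc_fps n (a j) = trunc_fps n (a i)"
      using cluster_pairs_eq_trunc_class[OF assms] by blast
  qed (use assms(2) in force)
  then show ?thesis
    by (simp add: w_center_def)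
qed

lemma val_diff_less_cluster_level:
  assumes "(I, n) \<in> cluster_pairs d a" "i \<in> I" "j \<in> {1..d} - I"
  shows "val_diff a i j < n"
proof -
  have "i \<in> {1..d}" "i \<noteq> j"
    using cluster_pairsD(1)[OF assms(1)] assms(2,3) by auto
  then have "a i \<noteq> a j"
    using inj_onD[OF inj] assms(3) by blast
  moreover have "trunc_fps n (a i) \<noteq> trunc_fps n (a j)"
    using cluster_pairs_eq_trunc_class[OF assms(1,2)] assms(3) by auto
  ultimately show ?thesis
    by (simp add: val_diff_def le_subdegree_diff_iff_trunc_fps_eq flip: not_le)
qed

lemma cluster_pairs_nested:
  assumes p: "(I, n) \<in> cluster_pairs d a" and q: "(I', n') \<in> cluster_pairs d a"
    and "(I, n) \<noteq> (I', n')" "n \<le> n'" "i \<in> I" "i' \<in> I'"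
    and "trunc_fps n (a i) = trunc_fps n (a i')"
  shows "i' \<in> I" "n < n'"
proof -
  have "i' \<in> {1..d}"
    using cluster_pairsD(1)[OF q] \<open>i' \<in> I'\<close> by auto
  then show i': "i' \<in> I"
    using cluster_pairs_eq_trunc_class[OF p \<open>i \<in> I\<close>] assms(7) by auto
  show "n < n'"
  proof (rule ccontr)
    assume "\<not> n < n'"
    then have "n' = n" using \<open>n \<le> n'\<close> by simp
    then have "I' = I"
      using cluster_pairs_eq_trunc_class[OF q \<open>i' \<in> I'\<close>] cluster_pairs_eq_trunc_class[OF p i']
      by simp
    with \<open>n' = n\<close> \<open>(I, n) \<noteq> (I', n')\<close> show False by simp
  qed
qed

end


section \<open>Choice of \<open>\<eta>\<close> and \<open>r\<close>\<close>

lemma ex_pos_lower_bound_finite: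
  fixes f :: "'a \<Rightarrow> real"
  assumes "finite A" "\<And>x. x \<in> A \<Longrightarrow> 0 < f x"
  shows "\<exists>c>0. \<forall>x\<in>A. c \<le> f x"
  using assms by (intro exI[of _ "Min (insert 1 (f ` A))"]) (auto intro: Min_le)

lemma ex_eta0_below_leading_coeffs:
  assumes "inj_on a {1..d}"
  shows "\<exists>\<eta>0>0. \<forall>i\<in>{1..d}. \<forall>j\<in>{1..d}. i \<noteq> j \<longrightarrow>
           4 * \<eta>0 \<le> norm (fps_nth (a i - a j) (val_diff a i j)) / 2 ^ val_diff a i j"
proof -
  define P where "P = {(i, j) \<in> {1..d} \<times> {1..d}. i \<noteq> j}"
  define sep where "sep = (\<lambda>(i, j). norm (fps_nth (a i - a j) (val_diff a i j)) / 2 ^ val_diff a i j)"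
  have "finite P"
    by (rule finite_subset[of _ "{1..d} \<times> {1..d}"]) (auto simp: P_def)
  moreover have "0 < sep x" if "x \<in> P" for x
  proof -
    obtain i j where x: "x = (i, j)"
      by fastforce
    have "a i - a j \<noteq> 0"
      using inj_onD[OF assms] that by (auto simp: P_def x)
    then show ?thesis
      using nth_subdegree_nonzero[of "a i - a j"] unfolding x sep_def val_diff_def by simp
  qed
  ultimately obtain c where "c > 0" and c: "\<forall>x\<in>P. c \<le> sep x"
    using ex_pos_lower_bound_finite[of P sep] by blast
  have "4 * (c / 4) \<le> sep (i, j)" if "i \<in> {1..d}" "j \<in> {1..d}" "i \<noteq> j" for i j
    using c that unfolding P_def by auto
  with \<open>c > 0\<close> show ?thesis
    by (intro exI[of _ "c / 4"]) (simp add: sep_def)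
qed

definition cut_levels :: "nat \<Rightarrow> enat set" where
  "cut_levels M = insert \<infinity> (enat ` {..M})"

lemma infinity_mem_cut_levels [simp]: "\<infinity> \<in> cut_levels M"
  by (simp add: cut_levels_def)

lemma enat_mem_cut_levels_iff [simp]: "enat n \<in> cut_levels M \<longleftrightarrow> n \<le> M"
  by (auto simp: cut_levels_def)

text \<open>
  Only finitely many truncation levels occur (all cluster levels are bounded by
  \<open>max_val_diff d a\<close>); this is what makes the estimates hold for one \<open>r\<close>.
\<close>

definition cluster_estimates :: "nat \<Rightarrow> (nat \<Rightarrow> complex fps) \<Rightarrow> real \<Rightarrow> real \<Rightarrow> complex \<Rightarrow> bool" where
  "cluster_estimates d a \<eta> r z \<longleftrightarrow>
     (\<forall>i\<in>{1..d}. \<forall>n\<in>{1..max_val_diff d a}. \<forall>s\<in>cut_levels (max_val_diff d a).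
        enat n \<le> s \<longrightarrow>
        norm (eval_fps (fps_cut s (a i)) z - poly (trunc_fps n (a i)) z) \<le> \<eta> / 2 * r ^ (n - 1)) \<and>
     (\<forall>i\<in>{1..d}. \<forall>j\<in>{1..d}. \<forall>s\<in>cut_levels (max_val_diff d a). \<forall>t\<in>cut_levels (max_val_diff d a).
        i \<noteq> j \<and> enat (val_diff a i j) < s \<and> enat (val_diff a i j) < t \<longrightarrow>
        3 * \<eta> * r ^ val_diff a i j
          \<le> norm (eval_fps (fps_cut s (a i)) z - eval_fps (fps_cut t (a j)) z))"

lemma eventually_cluster_estimates:
  assumes inj: "inj_on a {1..d}" and radius: "\<And>i. i \<in> {1..d} \<Longrightarrow> fps_conv_radius (a i) > 0"
    and "\<eta> > 0"
    and small: "\<And>i j. i \<in> {1..d} \<Longrightarrow> j \<in> {1..d} \<Longrightarrow> i \<noteq> j \<Longrightarrow>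
      4 * \<eta> < norm (fps_nth (a i - a j) (val_diff a i j)) / 2 ^ val_diff a i j"
  shows "\<forall>\<^sub>F r in at_right 0. \<forall>z. r / 2 < norm z \<and> norm z < r \<longrightarrow> cluster_estimates d a \<eta> r z"
proof -
  define M where "M = max_val_diff d a"
  define L where "L = cut_levels M"
  have "finite L"
    by (simp add: L_def cut_levels_def)
  have upper: "\<forall>\<^sub>F r in at_right 0. enat n \<le> s \<longrightarrow> (\<forall>z. norm z < r \<longrightarrow>
      norm (eval_fps (fps_cut s (a i)) z - poly (trunc_fps n (a i)) z) \<le> \<eta> / 2 * r ^ (n - 1))"
    if "i \<in> {1..d}" "n \<in> {1..M}" for i n s
  proof (cases "enat n \<le> s")
    case True
    with that \<open>\<eta> > 0\<close> show ?thesis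
      using eventually_norm_eval_fps_cut_diff_le[OF radius[OF that(1)], of n s "\<eta> / 2"] by simp
  qed simp
  have lower: "\<forall>\<^sub>F r in at_right 0.
      i \<noteq> j \<and> enat (val_diff a i j) < s \<and> enat (val_diff a i j) < t \<longrightarrow>
      (\<forall>z. r / 2 < norm z \<and> norm z < r \<longrightarrow> 3 * \<eta> * r ^ val_diff a i j
         \<le> norm (eval_fps (fps_cut s (a i)) z - eval_fps (fps_cut t (a j)) z))"
    if "i \<in> {1..d}" "j \<in> {1..d}" for i j s t
  proof (cases "i \<noteq> j \<and> enat (val_diff a i j) < s \<and> enat (val_diff a i j) < t")
    case True
    then have "a i \<noteq> a j"
      using inj_onD[OF inj] that by blast
    with True small[OF that] show ?thesis
      using eventually_norm_eval_fps_cut_diff_ge[OF radius[OF that(1)] radius[OF that(2)],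
          where s = s and t = t and \<eta> = \<eta>]
      by (simp add: val_diff_def)
  qed (rule always_eventually, blast)
  have "\<forall>\<^sub>F r in at_right 0. \<forall>i\<in>{1..d}. \<forall>n\<in>{1..M}. \<forall>s\<in>L. enat n \<le> s \<longrightarrow>
      (\<forall>z. norm z < r \<longrightarrow>
        norm (eval_fps (fps_cut s (a i)) z - poly (trunc_fps n (a i)) z) \<le> \<eta> / 2 * r ^ (n - 1))"
    using \<open>finite L\<close> by (intro eventually_ball_finite ballI upper) auto
  moreover have "\<forall>\<^sub>F r in at_right 0. \<forall>i\<in>{1..d}. \<forall>j\<in>{1..d}. \<forall>s\<in>L. \<forall>t\<in>L.
      i \<noteq> j \<and> enat (val_diff a i j) < s \<and> enat (val_diff a i j) < t \<longrightarrow>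
      (\<forall>z. r / 2 < norm z \<and> norm z < r \<longrightarrow> 3 * \<eta> * r ^ val_diff a i j
         \<le> norm (eval_fps (fps_cut s (a i)) z - eval_fps (fps_cut t (a j)) z))"
    using \<open>finite L\<close> by (intro eventually_ball_finite ballI lower) auto
  ultimately show ?thesis
    unfolding cluster_estimates_def M_def[symmetric] L_def[symmetric]
    by eventually_elim blast
qed


section \<open>Separation of the circles\<close>

lemma path_image_gamma_loop:
  assumes "0 \<le> r" "0 \<le> \<eta>"
  shows "path_image (gamma_loop a I n z0 \<eta> r) = sphere (w_center a I n z0) (r ^ (n - 1) * \<eta>)"
proof -
  have "gamma_loop a I n z0 \<eta> r = circlepath (w_center a I n z0) (r ^ (n - 1) * \<eta>)"
    by (simp add: gamma_loop_def circlepath fun_eq_iff)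
  then show ?thesis using assms by simp
qed

lemma sphere_disjoint_if_nested:
  assumes "dist c c' + \<rho>' < \<rho>"
  shows "sphere c \<rho> \<inter> sphere c' \<rho>' = {}"
proof -
  have "dist c x < \<rho>" if "x \<in> sphere c' \<rho>'" for x
    using dist_triangle[of c x c'] that assms by simp
  then show ?thesis by fastforce
qed

lemma sphere_disjoint_if_apart:
  "\<rho> + \<rho>' < dist c c' \<Longrightarrow> sphere c \<rho> \<inter> sphere c' \<rho>' = {}"
  using disjoint_cballI[of \<rho> \<rho>' c c'] sphere_cball by blast

context
  fixes d :: nat and a :: "nat \<Rightarrow> complex fps" and \<eta> r :: real and z0 :: complex
  assumes inj: "inj_on a {1..d}" and est: "cluster_estimates d a \<eta> r z0"
    and pos: "0 < \<eta>" "0 < r" and small_r: "r < 1 / 2"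
begin

lemma norm_eval_fps_cut_sub_w_center_le:
  assumes "(I, n) \<in> cluster_pairs d a" "i \<in> I" "s \<in> cut_levels (max_val_diff d a)" "enat n \<le> s"
  shows "norm (eval_fps (fps_cut s (a i)) z0 - w_center a I n z0) \<le> \<eta> / 2 * r ^ (n - 1)"
proof -
  have "i \<in> {1..d}"
    using cluster_pairsD(1)[OF assms(1)] assms(2) by blast
  moreover have "n \<in> {1..max_val_diff d a}"
    using cluster_pairs_level_le_max_val_diff[OF assms(1)] by simp
  ultimately show ?thesis
    using est assms(3,4) unfolding cluster_estimates_def w_center_cluster_pairs[OF inj assms(1,2)]
    by blast
qed

lemma norm_eval_fps_cut_diff_ge:
  assumes "i \<in> {1..d}" "j \<in> {1..d}" "i \<noteq> j"
    and "s \<in> cut_levels (max_val_diff d a)" "t \<in> cut_levels (max_val_diff d a)"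
    and "enat (val_diff a i j) < s" "enat (val_diff a i j) < t"
  shows "3 * \<eta> * r ^ val_diff a i j \<le> norm (eval_fps (fps_cut s (a i)) z0 - eval_fps (fps_cut t (a j)) z0)"
  using est assms unfolding cluster_estimates_def by blast

lemma eval_fps_mem_B_disk:
  assumes "(I, n) \<in> cluster_pairs d a" "i \<in> I"
  shows "eval_fps (a i) z0 \<in> B_disk a I n z0 \<eta> r"
proof -
  have "norm (eval_fps (a i) z0 - w_center a I n z0) \<le> \<eta> / 2 * r ^ (n - 1)"
    using norm_eval_fps_cut_sub_w_center_le[OF assms, of \<infinity>] by simp
  also have "\<dots> < r ^ (n - 1) * \<eta>"
    using pos by simp
  finally show ?thesis
    by (simp add: B_disk_def dist_norm norm_minus_commute)
qed

lemma eval_fps_notin_cball_w_center: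
  assumes p: "(I, n) \<in> cluster_pairs d a" and j: "j \<in> {1..d} - I"
  shows "eval_fps (a j) z0 \<notin> cball (w_center a I n z0) (r ^ (n - 1) * \<eta>)"
proof -
  obtain i where i: "i \<in> I"
    using cluster_pairs_level_le_val_diff[OF p] by blast
  define e where "e = val_diff a i j"
  have "e < n"
    using val_diff_less_cluster_level[OF inj p i j] by (simp add: e_def)
  have "i \<in> {1..d}" "i \<noteq> j"
    using cluster_pairsD(1)[OF p] i j by auto
  then have "3 * \<eta> * r ^ e \<le> norm (poly (trunc_fps n (a i)) z0 - eval_fps (a j) z0)"
    using norm_eval_fps_cut_diff_ge[of i j "enat n" \<infinity>] j \<open>e < n\<close>
      cluster_pairs_level_le_max_val_diff[OF p]
    by (simp add: e_def)
  moreover have "r ^ (n - 1) * \<eta> \<le> r ^ e * \<eta>"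
    using \<open>e < n\<close> pos small_r by (intro mult_right_mono power_decreasing) auto
  moreover have "r ^ e * \<eta> < 3 * \<eta> * r ^ e"
    using pos by simp
  ultimately have "r ^ (n - 1) * \<eta> < dist (w_center a I n z0) (eval_fps (a j) z0)"
    unfolding dist_norm w_center_cluster_pairs[OF inj p i] by linarith
  then show ?thesis
    by simp
qed

lemma circles_disjoint_if_le:
  assumes p: "(I, n) \<in> cluster_pairs d a" and q: "(I', n') \<in> cluster_pairs d a"
    and "(I, n) \<noteq> (I', n')" "n \<le> n'"
  shows "sphere (w_center a I n z0) (r ^ (n - 1) * \<eta>)
           \<inter> sphere (w_center a I' n' z0) (r ^ (n' - 1) * \<eta>) = {}"
proof -
  define \<rho> where "\<rho> = r ^ (n - 1) * \<eta>"
  define \<rho>' where "\<rho>' = r ^ (n' - 1) * \<eta>"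
  obtain i i' where i: "i \<in> I" and i': "i' \<in> I'"
    using cluster_pairs_level_le_val_diff[OF p] cluster_pairs_level_le_val_diff[OF q] by blast
  have n: "1 \<le> n" "n' \<le> max_val_diff d a"
    using cluster_pairs_level_le_max_val_diff[OF p] cluster_pairs_level_le_max_val_diff[OF q]
    by simp_all
  have close: "dist (w_center a I n z0) (w_center a I' n' z0) < \<rho> - \<rho>'"
    if same: "trunc_fps n (a i) = trunc_fps n (a i')"
  proof -
    note nested = cluster_pairs_nested[OF inj p q assms(3,4) i i' same]
    have "dist (w_center a I n z0) (w_center a I' n' z0) \<le> \<eta> / 2 * r ^ (n - 1)"
      using norm_eval_fps_cut_sub_w_center_le[OF p nested(1), of "enat n'"] nested(2) n
      by (simp add: dist_norm norm_minus_commute w_center_cluster_pairs[OF inj q i'])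
    also have "\<eta> / 2 * r ^ (n - 1) = \<rho> / 2"
      by (simp add: \<rho>_def)
    finally have "dist (w_center a I n z0) (w_center a I' n' z0) \<le> \<rho> / 2" .
    moreover have "\<rho>' \<le> r * \<rho>"
    proof -
      have "r ^ (n' - 1) \<le> r ^ n"
        using nested(2) pos small_r by (intro power_decreasing) auto
      also have "\<dots> = r * r ^ (n - 1)"
        using n by (cases n) auto
      finally show ?thesis
        unfolding \<rho>_def \<rho>'_def using pos by (simp add: mult_right_mono mult.assoc)
    qed
    moreover have "r * \<rho> < 1 / 2 * \<rho>"
      using small_r pos by (intro mult_strict_right_mono) (simp_all add: \<rho>_def)
    ultimately show ?thesis
      by linarith
  qed
  have far: "\<rho> + \<rho>' < dist (w_center a I n z0) (w_center a I' n' z0)"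
    if apart: "trunc_fps n (a i) \<noteq> trunc_fps n (a i')"
  proof -
    define e where "e = val_diff a i i'"
    have "i \<in> {1..d}" "i' \<in> {1..d}"
      using cluster_pairsD(1)[OF p] cluster_pairsD(1)[OF q] i i' by auto
    moreover have "i \<noteq> i'"
      using apart by auto
    ultimately have "a i \<noteq> a i'"
      using inj_onD[OF inj] by blast
    then have "e < n"
      using apart le_subdegree_diff_iff_trunc_fps_eq[of "a i" "a i'" n]
      by (simp add: e_def val_diff_def)
    have "3 * \<eta> * r ^ e \<le> dist (w_center a I n z0) (w_center a I' n' z0)"
      using norm_eval_fps_cut_diff_ge[of i i' "enat n" "enat n'"] \<open>i \<in> {1..d}\<close> \<open>i' \<in> {1..d}\<close>
        \<open>i \<noteq> i'\<close> \<open>e < n\<close> n \<open>n \<le> n'\<close>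
      by (simp add: dist_norm e_def w_center_cluster_pairs[OF inj p i] w_center_cluster_pairs[OF inj q i'])
    also have "3 * \<eta> * r ^ e = 3 * (r ^ e * \<eta>)"
      by simp
    finally have "3 * (r ^ e * \<eta>) \<le> dist (w_center a I n z0) (w_center a I' n' z0)" .
    moreover have "\<rho> \<le> r ^ e * \<eta>" "\<rho>' \<le> r ^ e * \<eta>"
      unfolding \<rho>_def \<rho>'_def using \<open>e < n\<close> \<open>n \<le> n'\<close> pos small_r
      by (intro mult_right_mono power_decreasing; simp)+
    moreover have "0 < r ^ e * \<eta>"
      using pos by simp
    ultimately show ?thesis
      by linarith
  qed
  show ?thesis
  proof (cases "trunc_fps n (a i) = trunc_fps n (a i')")
    case True
    show ?thesis
      using close[OF True] unfolding \<rho>_def \<rho>'_def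
      by (intro sphere_disjoint_if_nested) linarith
  next
    case False
    show ?thesis
      using far[OF False] unfolding \<rho>_def \<rho>'_def by (rule sphere_disjoint_if_apart)
  qed
qed

lemma circles_disjoint:
  assumes "(I, n) \<in> cluster_pairs d a" "(I', n') \<in> cluster_pairs d a" "(I, n) \<noteq> (I', n')"
  shows "sphere (w_center a I n z0) (r ^ (n - 1) * \<eta>)
           \<inter> sphere (w_center a I' n' z0) (r ^ (n' - 1) * \<eta>) = {}"
proof (cases "n \<le> n'")
  case False
  have "(I', n') \<noteq> (I, n)"
    using assms(3) by metis
  with False show ?thesis
    using circles_disjoint_if_le[OF assms(2,1)] by (simp add: Int_commute)
qed (rule circles_disjoint_if_le[OF assms])

lemma cluster_circles_separate:
  "(\<forall>p\<in>cluster_pairs d a. \<forall>q\<in>cluster_pairs d a. p \<noteq> q \<longrightarrow>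
      path_image (gamma_loop a (fst p) (snd p) z0 \<eta> r) \<inter>
      path_image (gamma_loop a (fst q) (snd q) z0 \<eta> r) = {}) \<and>
   (\<forall>(I, n)\<in>cluster_pairs d a.
      (\<forall>i\<in>I. eval_fps (a i) z0 \<in> B_disk a I n z0 \<eta> r) \<and>
      (\<forall>j\<in>{1..d} - I. eval_fps (a j) z0 \<notin>
          B_disk a I n z0 \<eta> r \<union> path_image (gamma_loop a I n z0 \<eta> r)))"
proof -
  have path: "path_image (gamma_loop a I n z0 \<eta> r) = sphere (w_center a I n z0) (r ^ (n - 1) * \<eta>)"
    for I n
    using pos by (simp add: path_image_gamma_loop)
  have "B_disk a I n z0 \<eta> r \<union> path_image (gamma_loop a I n z0 \<eta> r)
      \<subseteq> cball (w_center a I n z0) (r ^ (n - 1) * \<eta>)" for I n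
    by (auto simp: B_disk_def path)
  then show ?thesis
    using circles_disjoint eval_fps_mem_B_disk eval_fps_notin_cball_w_center
    by (fastforce simp: path)
qed

end

lemma ex_radius_cluster_circles_separate:
  assumes "inj_on a {1..d}" "\<And>i. i \<in> {1..d} \<Longrightarrow> fps_conv_radius (a i) > 0" "0 < \<eta>"
    and "\<And>i j. i \<in> {1..d} \<Longrightarrow> j \<in> {1..d} \<Longrightarrow> i \<noteq> j \<Longrightarrow>
      4 * \<eta> < norm (fps_nth (a i - a j) (val_diff a i j)) / 2 ^ val_diff a i j"
  shows "\<exists>r>0. \<forall>z0::complex. r / 2 < norm z0 \<and> norm z0 < r \<longrightarrow>
      (\<forall>p\<in>cluster_pairs d a. \<forall>q\<in>cluster_pairs d a. p \<noteq> q \<longrightarrow>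
         path_image (gamma_loop a (fst p) (snd p) z0 \<eta> r) \<inter>
         path_image (gamma_loop a (fst q) (snd q) z0 \<eta> r) = {}) \<and>
      (\<forall>(I, n)\<in>cluster_pairs d a.
         (\<forall>i\<in>I. eval_fps (a i) z0 \<in> B_disk a I n z0 \<eta> r) \<and>
         (\<forall>j\<in>{1..d} - I. eval_fps (a j) z0 \<notin>
              B_disk a I n z0 \<eta> r \<union> path_image (gamma_loop a I n z0 \<eta> r)))"
proof -
  have "\<forall>\<^sub>F r in at_right 0. \<forall>z. r / 2 < norm z \<and> norm z < r \<longrightarrow> cluster_estimates d a \<eta> r z"
    using assms by (rule eventually_cluster_estimates)
  moreover have "\<forall>\<^sub>F r in at_right (0::real). 0 < r \<and> r < 1 / 2"
    unfolding eventually_at_right_field by (intro exI[of _ "1 / 2"]) auto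
  ultimately have "\<forall>\<^sub>F r in at_right 0. 0 < r \<and> r < 1 / 2 \<and>
      (\<forall>z. r / 2 < norm z \<and> norm z < r \<longrightarrow> cluster_estimates d a \<eta> r z)"
    by eventually_elim blast
  moreover have "at_right (0::real) \<noteq> bot"
    by simp
  ultimately obtain r where r: "0 < r" "r < 1 / 2"
    and est: "\<And>z. r / 2 < norm z \<and> norm z < r \<Longrightarrow> cluster_estimates d a \<eta> r z"
    using eventually_happens' by blast
  show ?thesis
  proof (intro exI[of _ r] conjI[OF r(1)] allI impI)
    fix z0 :: complex
    assume "r / 2 < norm z0 \<and> norm z0 < r"
    then show "(\<forall>p\<in>cluster_pairs d a. \<forall>q\<in>cluster_pairs d a. p \<noteq> q \<longrightarrow>
         path_image (gamma_loop a (fst p) (snd p) z0 \<eta> r) \<inter>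
         path_image (gamma_loop a (fst q) (snd q) z0 \<eta> r) = {}) \<and>
      (\<forall>(I, n)\<in>cluster_pairs d a.
         (\<forall>i\<in>I. eval_fps (a i) z0 \<in> B_disk a I n z0 \<eta> r) \<and>
         (\<forall>j\<in>{1..d} - I. eval_fps (a j) z0 \<notin>
              B_disk a I n z0 \<eta> r \<union> path_image (gamma_loop a I n z0 \<eta> r)))"
      by (intro cluster_circles_separate assms(1) est r \<open>0 < \<eta>\<close>)
  qed
qed

theorem mainTheorem3:
  fixes d :: nat and a :: "nat \<Rightarrow> complex fps"
  assumes "d \<ge> 2"
    and "inj_on a {1..d}"
    and "\<And>i. i \<in> {1..d} \<Longrightarrow> fps_conv_radius (a i) > 0"
  shows "\<exists>\<eta>0>0. \<forall>\<eta>. 0 < \<eta> \<and> \<eta> < \<eta>0 \<longrightarrow>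
    (\<exists>r>0. \<forall>z0::complex. r / 2 < norm z0 \<and> norm z0 < r \<longrightarrow>
      (\<forall>p\<in>cluster_pairs d a. \<forall>q\<in>cluster_pairs d a. p \<noteq> q \<longrightarrow>
         path_image (gamma_loop a (fst p) (snd p) z0 \<eta> r) \<inter>
         path_image (gamma_loop a (fst q) (snd q) z0 \<eta> r) = {}) \<and>
      (\<forall>(I, n)\<in>cluster_pairs d a.
         (\<forall>i\<in>I. eval_fps (a i) z0 \<in> B_disk a I n z0 \<eta> r) \<and>
         (\<forall>j\<in>{1..d} - I. eval_fps (a j) z0 \<notin>
              B_disk a I n z0 \<eta> r \<union> path_image (gamma_loop a I n z0 \<eta> r))))"
proof -
  obtain \<eta>0 where "\<eta>0 > 0" and \<eta>0: "\<forall>i\<in>{1..d}. \<forall>j\<in>{1..d}. i \<noteq> j \<longrightarrow>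
      4 * \<eta>0 \<le> norm (fps_nth (a i - a j) (val_diff a i j)) / 2 ^ val_diff a i j"
    using ex_eta0_below_leading_coeffs[OF assms(2)] by blast
  show ?thesis
  proof (rule exI[of _ \<eta>0], intro conjI[OF \<open>\<eta>0 > 0\<close>] allI impI
      ex_radius_cluster_circles_separate[OF assms(2,3)])
    fix \<eta> :: real assume "0 < \<eta> \<and> \<eta> < \<eta>0"
    then show "0 < \<eta>" by simp
  next
    fix \<eta> :: real and i j
    assume "0 < \<eta> \<and> \<eta> < \<eta>0" "i \<in> {1..d}" "j \<in> {1..d}" "i \<noteq> j"
    with \<eta>0 show "4 * \<eta> < norm (fps_nth (a i - a j) (val_diff a i j)) / 2 ^ val_diff a i j"
      by force
  qed
qed

end
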